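(* Let $X$ be a finite set with $n\ge1$ elements. The number of uniformizable topologies on $X$, and also the number of topologies on $X$ that are both uniformizable and functional Alexandroff, equals the Bell number $B_n$ (the number of partitions of $X$), where $B_0=B_1=1$ and $B_{k+1}=\sum_{i=0}^{k}\binom{k}{i}B_i$ for $k\ge1$.
   Context: A topology on $X$ is uniformizable if it is induced by some uniform structure on $X$. For $f:X\to X$ and $a\in X$ let $V_f(a):=\{x\in X:\exists n\ge0,\ f^n(x)=a\}$; the topology with basis $\{V_f(a):a\in X\}$ is the functional Alexandroff topology associated to $f$, and a topology is functional Alexandroff if it equals the functional Alexandroff topology of some self-map of $X$. *)

theory Defs
  imports "HOL-Analysis.Analysis"
begin

definition uniformity_on :: "'a set \<Rightarrow> ('a \<times> 'a) set set \<Rightarrow> bool" where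
  "uniformity_on X \<U> \<longleftrightarrow>
     \<U> \<noteq> {} \<and>
     (\<forall>U\<in>\<U>. Id_on X \<subseteq> U \<and> U \<subseteq> X \<times> X) \<and>
     (\<forall>U\<in>\<U>. \<forall>V. U \<subseteq> V \<and> V \<subseteq> X \<times> X \<longrightarrow> V \<in> \<U>) \<and>
     (\<forall>U\<in>\<U>. \<forall>V\<in>\<U>. U \<inter> V \<in> \<U>) \<and>
     (\<forall>U\<in>\<U>. U\<inverse> \<in> \<U>) \<and>
     (\<forall>U\<in>\<U>. \<exists>V\<in>\<U>. V O V \<subseteq> U)"

definition uniform_open :: "'a set \<Rightarrow> ('a \<times> 'a) set set \<Rightarrow> 'a set \<Rightarrow> bool" where
  "uniform_open X \<U> G \<longleftrightarrow> G \<subseteq> X \<and> (\<forall>x\<in>G. \<exists>U\<in>\<U>. U `` {x} \<subseteq> G)"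

definition uniformizable :: "'a topology \<Rightarrow> bool" where
  "uniformizable T \<longleftrightarrow>
     (\<exists>\<U>. uniformity_on (topspace T) \<U> \<and> (\<forall>G. openin T G \<longleftrightarrow> uniform_open (topspace T) \<U> G))"

definition Vf :: "'a set \<Rightarrow> ('a \<Rightarrow> 'a) \<Rightarrow> 'a \<Rightarrow> 'a set" where
  "Vf X f a = {x\<in>X. \<exists>n. (f ^^ n) x = a}"

definition functional_alexandroff :: "'a topology \<Rightarrow> bool" where
  "functional_alexandroff T \<longleftrightarrow>
     (\<exists>f. (\<forall>x\<in>topspace T. f x \<in> topspace T) \<and>
          (\<forall>G. openin T G \<longleftrightarrow>
                 (\<exists>\<B>. \<B> \<subseteq> Vf (topspace T) f ` topspace T \<and> G = \<Union>\<B>)))"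

fun bell :: "nat \<Rightarrow> nat" where
  "bell 0 = 1"
| "bell (Suc k) = (\<Sum>i=0..k. (k choose i) * bell i)"

end

(*
  On a finite set a uniformity is closed under finite intersections, so it has a least
  entourage E. The uniformity axioms make E an equivalence relation, and the uniform topology
  is the one whose open sets are the E-saturated sets. Conversely, the supersets of an
  equivalence relation R form a uniformity inducing the R-saturated topology, and this topology
  is functional Alexandroff: for f cycling through each R-class, V_f(a) is the class of a.
  The classes are the minimal open neighbourhoods, so R is recovered from its topology. Hence
  both families of topologies are in bijection with the equivalence relations on X, which the
  Bell recursion counts: an equivalence relation on insert x Y is the same as a subset S of Y
  (the points outside the class of x) together with an equivalence relation on S.
*)
theory Submission
  imports Defs "HOL-Combinatorics.Cycles" "HOL-Combinatorics.Orbits"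
begin

section \<open>Counting equivalence relations\<close>

lemma equiv_Times_self: "equiv A (A \<times> A)"
  by (rule equivI) (auto simp: refl_on_def intro: symI transI)

lemma equiv_Un_disjoint:
  assumes r: "equiv A r" and s: "equiv B s" and disjoint: "A \<inter> B = {}"
  shows "equiv (A \<union> B) (r \<union> s)"
proof (rule equivI)
  from r s have rA: "r \<subseteq> A \<times> A" and sB: "s \<subseteq> B \<times> B" by (auto elim: equivE)
  then show "r \<union> s \<subseteq> (A \<union> B) \<times> (A \<union> B)" by blast
  show "refl_on (A \<union> B) (r \<union> s)" using r s by (auto elim!: equivE intro: refl_on_Un)
  show "sym (r \<union> s)" using r s by (auto elim!: equivE intro: sym_Un)
  show "trans (r \<union> s)"
  proof (rule transI)
    fix a b c assume "(a, b) \<in> r \<union> s" "(b, c) \<in> r \<union> s"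
    with rA sB disjoint have "(a, b) \<in> r \<and> (b, c) \<in> r \<or> (a, b) \<in> s \<and> (b, c) \<in> s" by blast
    then show "(a, c) \<in> r \<union> s" using r s by (auto elim!: equivE dest: transD)
  qed
qed

lemma equiv_restrict: "equiv A r \<Longrightarrow> B \<subseteq> A \<Longrightarrow> equiv B (r \<inter> B \<times> B)"
  by (rule equivI) (auto elim!: equivE simp: refl_on_def intro!: symI transI dest: symD transD)

lemma equiv_split_class:
  assumes r: "equiv A r" and "x \<in> A"
  shows "r = r \<inter> (A - r``{x}) \<times> (A - r``{x}) \<union> r``{x} \<times> r``{x}"
proof (intro equalityI subrelI)
  fix a b assume ab: "(a, b) \<in> r"
  then have "a \<in> A" "b \<in> A" and "a \<in> r``{x} \<longleftrightarrow> b \<in> r``{x}"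
    using equiv_class_eq_iff[OF r] by auto
  with ab show "(a, b) \<in> r \<inter> (A - r``{x}) \<times> (A - r``{x}) \<union> r``{x} \<times> r``{x}"
    by blast
next
  fix a b assume "(a, b) \<in> r \<inter> (A - r``{x}) \<times> (A - r``{x}) \<union> r``{x} \<times> r``{x}"
  then show "(a, b) \<in> r"
    using r by (auto elim!: equivE dest: symD transD)
qed

definition equivs :: "'a set \<Rightarrow> ('a \<times> 'a) set set" where
  "equivs A = {r. equiv A r}"

lemma finite_equivs: "finite A \<Longrightarrow> finite (equivs A)"
  by (rule finite_subset[of _ "Pow (A \<times> A)"]) (auto simp: equivs_def elim: equivE)

lemma equivs_empty: "equivs {} = {{}}"
  by (auto simp: equivs_def equiv_def refl_on_def sym_def trans_def)

lemma equiv_insert_class: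
  assumes "x \<notin> Y" and "S \<subseteq> Y" and "equiv S s"
  shows "equiv (insert x Y) (s \<union> insert x (Y - S) \<times> insert x (Y - S))"
proof -
  have "equiv (S \<union> insert x (Y - S)) (s \<union> insert x (Y - S) \<times> insert x (Y - S))"
    using assms by (intro equiv_Un_disjoint equiv_Times_self) auto
  moreover have "S \<union> insert x (Y - S) = insert x Y"
    using \<open>S \<subseteq> Y\<close> by blast
  ultimately show ?thesis
    by simp
qed

lemma bij_betw_equivs_insert:
  assumes "x \<notin> Y"
  shows "bij_betw (\<lambda>r. (Y - r``{x}, r \<inter> (Y - r``{x}) \<times> (Y - r``{x})))
           (equivs (insert x Y)) (SIGMA S:Pow Y. equivs S)"
proof (rule bij_betw_byWitness[where f' = "\<lambda>(S, s). s \<union> insert x (Y - S) \<times> insert x (Y - S)"])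
  show "\<forall>r\<in>equivs (insert x Y). (\<lambda>(S, s). s \<union> insert x (Y - S) \<times> insert x (Y - S))
          (Y - r``{x}, r \<inter> (Y - r``{x}) \<times> (Y - r``{x})) = r"
  proof
    fix r assume "r \<in> equivs (insert x Y)"
    then have r: "equiv (insert x Y) r" by (simp add: equivs_def)
    have x_class: "insert x (Y - (Y - r``{x})) = r``{x}"
      and rest_eq: "Y - r``{x} = insert x Y - r``{x}"
      using equiv_class_self[OF r] equiv_type[OF r] assms by auto
    have "(\<lambda>(S, s). s \<union> insert x (Y - S) \<times> insert x (Y - S))
          (Y - r``{x}, r \<inter> (Y - r``{x}) \<times> (Y - r``{x}))
        = r \<inter> (insert x Y - r``{x}) \<times> (insert x Y - r``{x}) \<union> r``{x} \<times> r``{x}"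
      by (simp only: prod.case x_class) (simp only: rest_eq)
    also have "\<dots> = r"
      by (rule equiv_split_class[OF r insertI1, symmetric])
    finally show "(\<lambda>(S, s). s \<union> insert x (Y - S) \<times> insert x (Y - S))
          (Y - r``{x}, r \<inter> (Y - r``{x}) \<times> (Y - r``{x})) = r" .
  qed
  show "\<forall>p\<in>SIGMA S:Pow Y. equivs S. (\<lambda>r. (Y - r``{x}, r \<inter> (Y - r``{x}) \<times> (Y - r``{x})))
          ((\<lambda>(S, s). s \<union> insert x (Y - S) \<times> insert x (Y - S)) p) = p"
  proof
    fix p assume "p \<in> (SIGMA S:Pow Y. equivs S)"
    then obtain S s where p: "p = (S, s)" and S: "S \<subseteq> Y" and "s \<in> equivs S" by blast
    then have s: "s \<subseteq> S \<times> S" by (simp add: equivs_def equiv_type)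
    let ?C = "insert x (Y - S)"
    have class_x: "(s \<union> ?C \<times> ?C)``{x} = ?C" and rest: "Y - ?C = S"
      and restrict: "(s \<union> ?C \<times> ?C) \<inter> S \<times> S = s"
      using s S assms by blast+
    show "(\<lambda>r. (Y - r``{x}, r \<inter> (Y - r``{x}) \<times> (Y - r``{x})))
          ((\<lambda>(S, s). s \<union> insert x (Y - S) \<times> insert x (Y - S)) p) = p"
      unfolding p by (simp only: prod.case class_x rest restrict)
  qed
  show "(\<lambda>r. (Y - r``{x}, r \<inter> (Y - r``{x}) \<times> (Y - r``{x}))) ` equivs (insert x Y)
          \<subseteq> (SIGMA S:Pow Y. equivs S)"
    by (auto simp: equivs_def intro: equiv_restrict)
  show "(\<lambda>(S, s). s \<union> insert x (Y - S) \<times> insert x (Y - S)) ` (SIGMA S:Pow Y. equivs S)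
          \<subseteq> equivs (insert x Y)"
    using equiv_insert_class[OF assms] by (auto simp: equivs_def)
qed

lemma sum_Pow_card:
  assumes "finite Y"
  shows "(\<Sum>T\<in>Pow Y. g (card T)) = (\<Sum>k=0..card Y. of_nat (card Y choose k) * g k)"
proof -
  have "(\<Sum>T\<in>Pow Y. g (card T)) = (\<Sum>k=0..card Y. \<Sum>T\<in>{T\<in>Pow Y. card T = k}. g (card T))"
    using assms by (intro sum.group[symmetric]) (auto intro: card_mono)
  also have "\<dots> = (\<Sum>k=0..card Y. of_nat (card Y choose k) * g k)"
  proof (rule sum.cong[OF refl])
    fix k
    have "{T\<in>Pow Y. card T = k} = {T. T \<subseteq> Y \<and> card T = k}" by auto
    then show "(\<Sum>T\<in>{T\<in>Pow Y. card T = k}. g (card T)) = of_nat (card Y choose k) * g k"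
      using n_subsets[OF assms, of k] by simp
  qed
  finally show ?thesis .
qed

lemma card_equivs: "finite A \<Longrightarrow> card (equivs A) = bell (card A)"
proof (induction "card A" arbitrary: A rule: less_induct)
  case less
  show ?case
  proof (cases "A = {}")
    case True
    then show ?thesis by (simp add: equivs_empty)
  next
    case False
    then obtain x Y where A: "A = insert x Y" "x \<notin> Y"
      by (meson Set.set_insert ex_in_conv)
    have Y: "finite Y" using less.prems A by simp
    have IH: "card (equivs S) = bell (card S)" if "S \<subseteq> Y" for S
    proof (rule less.hyps)
      show "finite S" using finite_subset[OF that Y] .
      show "card S < card A" using card_mono[OF Y that] A Y by simp
    qed
    have "card (equivs A) = card (SIGMA S:Pow Y. equivs S)"
      using bij_betw_same_card[OF bij_betw_equivs_insert[OF A(2)]] A(1) by simp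
    also have "\<dots> = (\<Sum>S\<in>Pow Y. bell (card S))"
      using Y IH by (simp add: card_SigmaI finite_equivs finite_subset)
    also have "\<dots> = bell (card A)"
      using A Y by (simp add: sum_Pow_card)
    finally show ?thesis .
  qed
qed

section \<open>The topology of an equivalence relation\<close>

definition equiv_topology :: "'a set \<Rightarrow> ('a \<times> 'a) set \<Rightarrow> 'a topology" where
  "equiv_topology A r = topology (\<lambda>U. U \<subseteq> A \<and> r `` U \<subseteq> U)"

lemma openin_equiv_topology: "openin (equiv_topology A r) U \<longleftrightarrow> U \<subseteq> A \<and> r `` U \<subseteq> U"
proof -
  have "istopology (\<lambda>U. U \<subseteq> A \<and> r `` U \<subseteq> U)"
    unfolding istopology_def by blast
  then show ?thesis
    by (simp add: equiv_topology_def)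
qed

lemma topspace_equiv_topology: "r \<subseteq> A \<times> A \<Longrightarrow> topspace (equiv_topology A r) = A"
  unfolding topspace_def openin_equiv_topology by blast

lemma openin_equiv_topology_class:
  "equiv A r \<Longrightarrow> x \<in> A \<Longrightarrow> openin (equiv_topology A r) (r``{x})"
  unfolding openin_equiv_topology by (auto elim!: equivE dest: transD)

lemma inj_on_equiv_topology: "inj_on (equiv_topology A) (equivs A)"
proof (rule inj_onI)
  fix r s assume "r \<in> equivs A" "s \<in> equivs A" and eq: "equiv_topology A r = equiv_topology A s"
  then have r: "equiv A r" and s: "equiv A s" by (simp_all add: equivs_def)
  have "r``{x} = s``{x}" if "x \<in> A" for x
  proof
    show "s``{x} \<subseteq> r``{x}"
      using openin_equiv_topology_class[OF r that] equiv_class_self[OF r that]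
      unfolding eq openin_equiv_topology by blast
    show "r``{x} \<subseteq> s``{x}"
      using openin_equiv_topology_class[OF s that] equiv_class_self[OF s that]
      unfolding eq[symmetric] openin_equiv_topology by blast
  qed
  then show "r = s"
    using equiv_type[OF r] equiv_type[OF s] by blast
qed

section \<open>Uniformities on a finite set\<close>

lemma uniform_open_least_entourage:
  assumes "e \<in> \<U>" and "\<And>V. V \<in> \<U> \<Longrightarrow> e \<subseteq> V"
  shows "uniform_open A \<U> U \<longleftrightarrow> U \<subseteq> A \<and> e `` U \<subseteq> U"
  using assms unfolding uniform_open_def by blast

lemma uniformity_onD:
  assumes "uniformity_on A \<U>"
  shows "\<U> \<noteq> {}"
    and "\<And>U. U \<in> \<U> \<Longrightarrow> Id_on A \<subseteq> U \<and> U \<subseteq> A \<times> A"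
    and "\<And>U V. U \<in> \<U> \<Longrightarrow> V \<in> \<U> \<Longrightarrow> U \<inter> V \<in> \<U>"
    and "\<And>U. U \<in> \<U> \<Longrightarrow> U\<inverse> \<in> \<U>"
    and "\<And>U. U \<in> \<U> \<Longrightarrow> \<exists>V\<in>\<U>. V O V \<subseteq> U"
  using assms unfolding uniformity_on_def by (elim conjE; meson)+

lemma uniformity_on_supersets:
  assumes r: "equiv A r"
  shows "uniformity_on A {V. r \<subseteq> V \<and> V \<subseteq> A \<times> A}" (is "uniformity_on A ?\<U>")
proof -
  have "Id_on A \<subseteq> r"
    using r by (auto simp: equiv_def refl_on_def)
  have "r \<subseteq> A \<times> A"
    using r by (rule equiv_type)
  have "r\<inverse> = r"
    using r by (simp add: equiv_def sym_conv_converse_eq)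
  have "r O r \<subseteq> r"
    using r by (simp add: equiv_def trans_O_subset)
  have nonempty: "?\<U> \<noteq> {}"
    using \<open>r \<subseteq> A \<times> A\<close> by blast
  have entourage: "\<forall>U\<in>?\<U>. Id_on A \<subseteq> U \<and> U \<subseteq> A \<times> A"
    using \<open>Id_on A \<subseteq> r\<close> by blast
  have upward: "\<forall>U\<in>?\<U>. \<forall>V. U \<subseteq> V \<and> V \<subseteq> A \<times> A \<longrightarrow> V \<in> ?\<U>"
    by blast
  have inter: "\<forall>U\<in>?\<U>. \<forall>V\<in>?\<U>. U \<inter> V \<in> ?\<U>"
    by blast
  have converse: "\<forall>U\<in>?\<U>. U\<inverse> \<in> ?\<U>"
  proof
    fix U assume "U \<in> ?\<U>"
    then have "r\<inverse> \<subseteq> U\<inverse>" and "U\<inverse> \<subseteq> A \<times> A" by auto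
    with \<open>r\<inverse> = r\<close> show "U\<inverse> \<in> ?\<U>" by simp
  qed
  have square: "\<forall>U\<in>?\<U>. \<exists>V\<in>?\<U>. V O V \<subseteq> U"
    using \<open>r O r \<subseteq> r\<close> \<open>r \<subseteq> A \<times> A\<close> by blast
  show ?thesis
    unfolding uniformity_on_def by (intro conjI nonempty entourage upward inter converse square)
qed

lemma uniformizable_equiv_topology:
  assumes r: "equiv A r"
  shows "uniformizable (equiv_topology A r)"
  unfolding uniformizable_def topspace_equiv_topology[OF equiv_type[OF r]]
proof (intro exI conjI allI)
  let ?\<U> = "{V. r \<subseteq> V \<and> V \<subseteq> A \<times> A}"
  show "uniformity_on A ?\<U>"
    by (rule uniformity_on_supersets[OF r])
  have "uniform_open A ?\<U> U \<longleftrightarrow> U \<subseteq> A \<and> r `` U \<subseteq> U" for U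
    by (rule uniform_open_least_entourage) (use equiv_type[OF r] in auto)
  then show "openin (equiv_topology A r) U \<longleftrightarrow> uniform_open A ?\<U> U" for U
    by (simp add: openin_equiv_topology)
qed

lemma Inter_in_uniformity:
  assumes \<U>: "uniformity_on A \<U>" and "finite A"
  shows "\<Inter>\<U> \<in> \<U>"
proof (rule finite_Inf_in)
  have "\<U> \<subseteq> Pow (A \<times> A)"
    using uniformity_onD(2)[OF \<U>] by blast
  then show "finite \<U>"
    using \<open>finite A\<close> by (simp add: finite_subset)
  show "\<U> \<noteq> {}" and "\<And>U V. U \<in> \<U> \<Longrightarrow> V \<in> \<U> \<Longrightarrow> inf U V \<in> \<U>"
    using uniformity_onD(1,3)[OF \<U>] by simp_all
qed

lemma equiv_Inter_uniformity:
  assumes \<U>: "uniformity_on A \<U>" and E: "\<Inter>\<U> \<in> \<U>"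
  shows "equiv A (\<Inter>\<U>)"
proof (rule equivI)
  show "\<Inter>\<U> \<subseteq> A \<times> A" and "refl_on A (\<Inter>\<U>)"
    using uniformity_onD(2)[OF \<U> E] by (auto simp: refl_on_def)
  have sub_converse: "\<Inter>\<U> \<subseteq> (\<Inter>\<U>)\<inverse>"
    using uniformity_onD(4)[OF \<U> E] by (rule Inter_lower)
  show "sym (\<Inter>\<U>)"
  proof (rule symI)
    fix a b assume "(a, b) \<in> \<Inter>\<U>"
    with sub_converse have "(a, b) \<in> (\<Inter>\<U>)\<inverse>" by (rule subsetD)
    then show "(b, a) \<in> \<Inter>\<U>" by (rule converseD)
  qed
  obtain W where W: "W \<in> \<U>" and WW: "W O W \<subseteq> \<Inter>\<U>"
    using uniformity_onD(5)[OF \<U> E] by blast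
  have comp: "\<Inter>\<U> O \<Inter>\<U> \<subseteq> \<Inter>\<U>"
    using relcomp_mono[OF Inter_lower[OF W] Inter_lower[OF W]] WW by (rule subset_trans)
  show "trans (\<Inter>\<U>)"
  proof (rule transI)
    fix a b c assume "(a, b) \<in> \<Inter>\<U>" "(b, c) \<in> \<Inter>\<U>"
    then have "(a, c) \<in> \<Inter>\<U> O \<Inter>\<U>" by (rule relcompI)
    with comp show "(a, c) \<in> \<Inter>\<U>" by (rule subsetD)
  qed
qed

lemma uniformizable_imp_equiv_topology:
  assumes "uniformizable T" and "finite (topspace T)"
  shows "\<exists>r. equiv (topspace T) r \<and> T = equiv_topology (topspace T) r"
proof -
  obtain \<U> where \<U>: "uniformity_on (topspace T) \<U>"
    and open_T: "\<And>U. openin T U \<longleftrightarrow> uniform_open (topspace T) \<U> U"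
    using assms(1) unfolding uniformizable_def by blast
  have E: "\<Inter>\<U> \<in> \<U>"
    using Inter_in_uniformity[OF \<U> assms(2)] .
  have "openin T U \<longleftrightarrow> openin (equiv_topology (topspace T) (\<Inter>\<U>)) U" for U
    unfolding open_T openin_equiv_topology
    by (rule uniform_open_least_entourage[OF E Inter_lower])
  then have "T = equiv_topology (topspace T) (\<Inter>\<U>)"
    by (simp add: topology_eq)
  with equiv_Inter_uniformity[OF \<U> E] show ?thesis by blast
qed

lemma uniformizable_topologies_finite:
  assumes "finite A"
  shows "{T. topspace T = A \<and> uniformizable T} = equiv_topology A ` equivs A"
proof -
  have "topspace T = A \<and> uniformizable T \<longleftrightarrow> T \<in> equiv_topology A ` equivs A" for T
  proof
    assume "topspace T = A \<and> uniformizable T"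
    with assms obtain r where "equiv A r" "T = equiv_topology A r"
      using uniformizable_imp_equiv_topology by blast
    then show "T \<in> equiv_topology A ` equivs A"
      by (simp add: equivs_def)
  next
    assume "T \<in> equiv_topology A ` equivs A"
    then obtain r where r: "equiv A r" and T: "T = equiv_topology A r"
      by (auto simp: equivs_def)
    show "topspace T = A \<and> uniformizable T"
      unfolding T using topspace_equiv_topology[OF equiv_type[OF r]] uniformizable_equiv_topology[OF r]
      by simp
  qed
  then show ?thesis
    by blast
qed

section \<open>Functional Alexandroff topologies\<close>

lemma ex_cyclic_on:
  assumes "finite C" and "C \<noteq> {}"
  shows "\<exists>g. cyclic_on g C"
proof -
  obtain cs where cs: "set cs = C" "distinct cs"
    using finite_distinct_list[OF assms(1)] by blast
  let ?g = "cycle_of_list cs"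
  have len: "0 < length cs"
    using cs(1) assms(2) by (cases cs) simp_all
  have iterate: "(?g ^^ n) (cs ! 0) = cs ! (n mod length cs)" for n
  proof -
    have "(?g ^^ n) (cs ! 0) = map (?g ^^ n) cs ! 0"
      using len by simp
    also have "\<dots> = rotate n cs ! 0"
      by (simp only: cyclic_rotation[OF cs(2)])
    also have "\<dots> = cs ! (n mod length cs)"
      using nth_rotate[OF len, of n] by simp
    finally show ?thesis .
  qed
  have "orbit ?g (cs ! 0) = {cs ! (n mod length cs) | n. True}"
    unfolding orbit_altdef_permutation[OF permutation_of_cycle] iterate ..
  also have "\<dots> = C"
  proof
    show "{cs ! (n mod length cs) | n. True} \<subseteq> C"
      using cs(1) len by auto
    show "C \<subseteq> {cs ! (n mod length cs) | n. True}"
    proof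
      fix y assume "y \<in> C"
      then obtain j where "j < length cs" "y = cs ! j"
        using cs(1) by (auto simp: in_set_conv_nth)
      then have "y = cs ! (j mod length cs)" by simp
      then show "y \<in> {cs ! (n mod length cs) | n. True}" by blast
    qed
  qed
  finally have "C = orbit ?g (cs ! 0)" ..
  moreover have "cs ! 0 \<in> C"
    using cs(1) len by auto
  ultimately have "cyclic_on ?g C"
    by (intro cyclic_on_singleI)
  then show ?thesis
    by blast
qed

lemma ex_funpow_eq_iff: "(\<exists>n. (f ^^ n) x = y) \<longleftrightarrow> y = x \<or> y \<in> orbit f x"
proof
  assume "\<exists>n. (f ^^ n) x = y"
  then obtain n where n: "(f ^^ n) x = y" ..
  show "y = x \<or> y \<in> orbit f x"
  proof (cases "n = 0")
    case True
    then show ?thesis using n by simp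
  next
    case False
    then have "y \<in> {(f ^^ n) x | n. 0 < n}" using n by blast
    then show ?thesis by (simp add: orbit_altdef)
  qed
next
  assume "y = x \<or> y \<in> orbit f x"
  then show "\<exists>n. (f ^^ n) x = y"
  proof
    assume "y = x"
    then have "(f ^^ 0) x = y" by simp
    then show ?thesis ..
  next
    assume "y \<in> orbit f x"
    then show ?thesis by (auto simp: orbit_altdef)
  qed
qed

lemma saturated_iff_Union_quotient:
  assumes r: "equiv A r"
  shows "U \<subseteq> A \<and> r `` U \<subseteq> U \<longleftrightarrow> (\<exists>\<B>. \<B> \<subseteq> A // r \<and> U = \<Union>\<B>)"
proof
  assume U: "U \<subseteq> A \<and> r `` U \<subseteq> U"
  have "U // r \<subseteq> A // r"
    using U by (auto simp: quotient_def)
  moreover have "U = \<Union>(U // r)"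
    using U equiv_class_self[OF r] by (auto simp: quotient_def)
  ultimately show "\<exists>\<B>. \<B> \<subseteq> A // r \<and> U = \<Union>\<B>" by blast
next
  assume "\<exists>\<B>. \<B> \<subseteq> A // r \<and> U = \<Union>\<B>"
  then obtain \<B> where "\<B> \<subseteq> A // r" "U = \<Union>\<B>" by blast
  then show "U \<subseteq> A \<and> r `` U \<subseteq> U"
    using in_quotient_imp_subset[OF r] in_quotient_imp_closed[OF r] by blast
qed

lemma ex_orbits_eq_classes:
  assumes r: "equiv A r" and "finite A"
  shows "\<exists>f. \<forall>x\<in>A. orbit f x = r``{x}"
proof -
  have "\<exists>g. cyclic_on g C" if "C \<in> A // r" for C
    using that \<open>finite A\<close> in_quotient_imp_subset[OF r] in_quotient_imp_non_empty[OF r]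
    by (intro ex_cyclic_on) (auto intro: finite_subset)
  then obtain g :: "'a set \<Rightarrow> 'a \<Rightarrow> 'a" where g: "\<And>C. C \<in> A // r \<Longrightarrow> cyclic_on (g C) C"
    by metis
  define f where "f x = g (r``{x}) x" for x
  have "orbit f x = r``{x}" if x: "x \<in> A" for x
  proof -
    let ?C = "r``{x}"
    have cyc: "cyclic_on (g ?C) ?C"
      using g quotientI[OF x] by blast
    have f_eq: "f y = g ?C y" if "y \<in> ?C" for y
      using equiv_class_eq[OF r] that by (simp add: f_def)
    have "f \<in> ?C \<rightarrow> ?C"
      using f_eq cyclic_on_inI[OF cyc] by simp
    then have "orbit f x = orbit (g ?C) x"
      using equiv_class_self[OF r x] f_eq by (intro orbit_cong0)
    also have "\<dots> = ?C"
      using cyc equiv_class_self[OF r x] by (simp add: cyclic_on_alldef)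
    finally show ?thesis .
  qed
  then show ?thesis
    by blast
qed

lemma functional_alexandroff_equiv_topology:
  assumes r: "equiv A r" and "finite A"
  shows "functional_alexandroff (equiv_topology A r)"
proof -
  obtain f where orbit_f: "\<And>x. x \<in> A \<Longrightarrow> orbit f x = r``{x}"
    using ex_orbits_eq_classes[OF assms] by blast
  have sym: "sym r"
    using r by (rule equivE)
  have Vf_eq: "Vf A f a = r``{a}" for a
  proof -
    have "Vf A f a = {x \<in> A. a = x \<or> a \<in> orbit f x}"
      by (simp add: Vf_def ex_funpow_eq_iff)
    also have "\<dots> = {x \<in> A. (x, a) \<in> r}"
      using orbit_f equiv_class_self[OF r] by auto
    also have "\<dots> = r``{a}"
      using equiv_type[OF r] by (auto dest: symD[OF sym])
    finally show ?thesis .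
  qed
  have Vf_image: "Vf A f ` A = A // r"
    using Vf_eq by (auto simp: quotient_def)
  show ?thesis
    unfolding functional_alexandroff_def topspace_equiv_topology[OF equiv_type[OF r]]
  proof (intro exI[of _ f] conjI allI ballI)
    show "f x \<in> A" if "x \<in> A" for x
      using orbit.base[of f x] orbit_f[OF that] equiv_type[OF r] by blast
    show "openin (equiv_topology A r) U \<longleftrightarrow> (\<exists>\<B>. \<B> \<subseteq> Vf A f ` A \<and> U = \<Union>\<B>)" for U
      unfolding Vf_image openin_equiv_topology by (rule saturated_iff_Union_quotient[OF r])
  qed
qed

theorem mainTheorem6:
  fixes X :: "'a set" and n :: nat
  assumes "finite X" and "card X = n" and "n \<ge> 1"
  shows "card {T :: 'a topology. topspace T = X \<and> uniformizable T} = bell n \<and>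
         card {T :: 'a topology. topspace T = X \<and> uniformizable T \<and> functional_alexandroff T} = bell n"
proof -
  have uniformizable: "{T :: 'a topology. topspace T = X \<and> uniformizable T} = equiv_topology X ` equivs X"
    using \<open>finite X\<close> by (rule uniformizable_topologies_finite)
  have "functional_alexandroff T" if "T \<in> equiv_topology X ` equivs X" for T
    using that \<open>finite X\<close> functional_alexandroff_equiv_topology by (auto simp: equivs_def)
  then have "{T :: 'a topology. topspace T = X \<and> uniformizable T \<and> functional_alexandroff T}
      = equiv_topology X ` equivs X"
    using uniformizable by blast
  moreover have "card (equiv_topology X ` equivs X) = bell n"
    using card_image[OF inj_on_equiv_topology[of X]] card_equivs[OF \<open>finite X\<close>] \<open>card X = n\<close> by simp
  ultimately show ?thesis
    using uniformizable by simp
qed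

end
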